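(* Let $G$ be a graph with vertex set $[n]$, let $\pi\in\mathrm{Ham}(G)$ be a Hamiltonian path of $G$, and let $p=(p_1,\dots,p_n)\in[n]^n$ be a parking preference. Then $p\in\mathrm{FPF}(G)$ with $\mathcal{O}_G(p)=\pi$ if and only if for every $i\in[n]$ we have $p_i\in S_i$, where $S_i:=\{s\in[n] : \pi_s\in B(i,\pi,G)\}$ is the set of positions in $\pi$ occupied by elements of the blocking sequence $B(i,\pi,G)$.
   Context: $[n]=\{1,\dots,n\}$, $S_n$ is the set of permutations of $[n]$ in one-line notation $\pi=\pi_1\cdots\pi_n$. Friendship parking process for a graph $G$ on $[n]$ and a parking preference $p\in[n]^n$: cars $1,\dots,n$ enter in order into spots $1,\dots,n$ (initially empty); spot $k$ is available for car $i$ if it is unoccupied when $i$ enters and each of spots $k-1,k+1$ is unoccupied or occupied by a car adjacent to $i$ in $G$ (spots $0,n+1$ count as unoccupied); car $i$ parks in the first available spot $k\ge p_i$, failing otherwise. $\mathrm{FPF}(G)$ is the set of $p$ for which all cars park; for such $p$, $\mathcal{O}_G(p)=\pi\in S_n$ where $\pi_k$ is the car in spot $k$ at the end. $\mathrm{Ham}(G)$ is the set of permutations $\pi\in S_n$ with $\{\pi_k,\pi_{k+1}\}$ an edge of $G$ for all $k\in[n-1]$. Blockers: for $\pi\in\mathrm{Ham}(G)$ and $i\in[n]$, an element $j=\pi_k$ is a blocker for $i$ in $\pi$ if either (1) $j\le i$, or (2) $j>i$ and there is $\ell\in\{\pi_{k-1},\pi_{k+1}\}$ (a neighbour of $j$ in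 the sequence $\pi$) with $\ell<i$ and $\ell$ not adjacent to $i$ in $G$. The blocking sequence $B(i,\pi,G)$ is the longest contiguous block $\pi_s\pi_{s+1}\cdots\pi_{t}$ of $\pi$ ending at $\pi_t=i$ all of whose elements are blockers for $i$; $b(i,\pi,G)$ denotes its length. *)

theory Defs
  imports Main
begin

(* Graph on [n] = {1..n}: adjacency relation E (assumed symmetric, irreflexive).
   Cars and spots are 1..n.  A parking preference is p :: nat => nat, only p 1..p n matter.
   A configuration occ maps a spot to the car parked there (None = empty). *)

definition spot_available :: "(nat \<Rightarrow> nat \<Rightarrow> bool) \<Rightarrow> nat \<Rightarrow> (nat \<Rightarrow> nat option) \<Rightarrow> nat \<Rightarrow> nat \<Rightarrow> bool" where
  "spot_available E n occ i k \<longleftrightarrow>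
     k \<in> {1..n} \<and> occ k = None \<and>
     (k - 1 < 1 \<or> (case occ (k - 1) of None \<Rightarrow> True | Some c \<Rightarrow> E i c)) \<and>
     (k + 1 > n \<or> (case occ (k + 1) of None \<Rightarrow> True | Some c \<Rightarrow> E i c))"

definition park_car :: "(nat \<Rightarrow> nat \<Rightarrow> bool) \<Rightarrow> nat \<Rightarrow> (nat \<Rightarrow> nat) \<Rightarrow> (nat \<Rightarrow> nat option) \<Rightarrow> nat \<Rightarrow> (nat \<Rightarrow> nat option) option" where
  "park_car E n p occ i =
     (case find (spot_available E n occ i) [p i..<n+1] of
        None \<Rightarrow> None
      | Some k \<Rightarrow> Some (occ(k := Some i)))"

fun park_seq :: "(nat \<Rightarrow> nat \<Rightarrow> bool) \<Rightarrow> nat \<Rightarrow> (nat \<Rightarrow> nat) \<Rightarrow> nat \<Rightarrow> (nat \<Rightarrow> nat option) option" where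
  "park_seq E n p 0 = Some (\<lambda>_. None)"
| "park_seq E n p (Suc m) =
     (case park_seq E n p m of None \<Rightarrow> None | Some occ \<Rightarrow> park_car E n p occ (Suc m))"

definition FPF :: "(nat \<Rightarrow> nat \<Rightarrow> bool) \<Rightarrow> nat \<Rightarrow> (nat \<Rightarrow> nat) set" where
  "FPF E n = {p. (\<forall>i\<in>{1..n}. p i \<in> {1..n}) \<and> park_seq E n p n \<noteq> None}"

definition outcome :: "(nat \<Rightarrow> nat \<Rightarrow> bool) \<Rightarrow> nat \<Rightarrow> (nat \<Rightarrow> nat) \<Rightarrow> nat \<Rightarrow> nat" where
  "outcome E n p k = the (the (park_seq E n p n) k)"

(* permutations of [n] in one-line notation: pi k = pi_k *)
definition Ham :: "(nat \<Rightarrow> nat \<Rightarrow> bool) \<Rightarrow> nat \<Rightarrow> (nat \<Rightarrow> nat) set" where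
  "Ham E n = {\<pi>. bij_betw \<pi> {1..n} {1..n} \<and> (\<forall>k\<in>{1..<n}. E (\<pi> k) (\<pi> (k+1)))}"

definition pos :: "nat \<Rightarrow> (nat \<Rightarrow> nat) \<Rightarrow> nat \<Rightarrow> nat" where
  "pos n \<pi> i = (THE k. k \<in> {1..n} \<and> \<pi> k = i)"

definition blocker_at :: "(nat \<Rightarrow> nat \<Rightarrow> bool) \<Rightarrow> nat \<Rightarrow> (nat \<Rightarrow> nat) \<Rightarrow> nat \<Rightarrow> nat \<Rightarrow> bool" where
  "blocker_at E n \<pi> i k \<longleftrightarrow>
     \<pi> k \<le> i \<or>
     (\<pi> k > i \<and>
       (\<exists>l\<in>{k - 1, k + 1}. l \<in> {1..n} \<and> \<pi> l < i \<and> \<not> E (\<pi> l) i))"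

definition block_start :: "(nat \<Rightarrow> nat \<Rightarrow> bool) \<Rightarrow> nat \<Rightarrow> (nat \<Rightarrow> nat) \<Rightarrow> nat \<Rightarrow> nat" where
  "block_start E n \<pi> i = (LEAST s. 1 \<le> s \<and> (\<forall>r\<in>{s..pos n \<pi> i}. blocker_at E n \<pi> i r))"

definition blocking_seq :: "(nat \<Rightarrow> nat \<Rightarrow> bool) \<Rightarrow> nat \<Rightarrow> (nat \<Rightarrow> nat) \<Rightarrow> nat \<Rightarrow> nat list" where
  "blocking_seq E n \<pi> i = map \<pi> [block_start E n \<pi> i..<pos n \<pi> i + 1]"

definition S_set :: "(nat \<Rightarrow> nat \<Rightarrow> bool) \<Rightarrow> nat \<Rightarrow> (nat \<Rightarrow> nat) \<Rightarrow> nat \<Rightarrow> nat set" where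
  "S_set E n \<pi> i = {s\<in>{1..n}. \<pi> s \<in> set (blocking_seq E n \<pi> i)}"

end

theory Submission imports Defs begin

text \<open>
  Call \<open>partial_outcome n \<pi> m\<close> the configuration in which cars \<open>1, \<dots>, m\<close> occupy their spots
  in \<pi> and all other spots are empty. Suppose cars \<open>1, \<dots>, i - 1\<close> have produced it. Spot
  \<open>pos i\<close> is then available to car \<open>i\<close>, because its occupied neighbours are neighbours of \<open>i\<close>
  on the Hamiltonian path, and an earlier spot \<open>k\<close> is available exactly when \<open>\<pi> k\<close> is not a
  blocker for \<open>i\<close>. Hence car \<open>i\<close> parks at \<open>pos i\<close>, extending the configuration to
  \<open>partial_outcome n \<pi> i\<close>, iff its preference lies in the blocking sequence. Induction over the
  cars gives both directions; for "only if", spots are never vacated, so the final outcome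
  forces each car onto its spot in \<pi>.
\<close>

lemma find_upt_eq_Some_iff:
  "find P [a..<b] = Some k \<longleftrightarrow> a \<le> k \<and> k < b \<and> P k \<and> (\<forall>j\<in>{a..<k}. \<not> P j)"
proof
  assume "find P [a..<b] = Some k"
  then obtain i where i: "i < b - a" "P (a + i)" "k = a + i" "\<forall>j<i. \<not> P (a + j)"
    by (auto simp: find_Some_iff)
  show "a \<le> k \<and> k < b \<and> P k \<and> (\<forall>j\<in>{a..<k}. \<not> P j)"
  proof (intro conjI ballI)
    fix j assume "j \<in> {a..<k}"
    then show "\<not> P j" using i(3,4)
      by (metis atLeastLessThan_iff le_add_diff_inverse nat_add_left_cancel_less)
  qed (use i in auto)
next
  assume "a \<le> k \<and> k < b \<and> P k \<and> (\<forall>j\<in>{a..<k}. \<not> P j)"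
  then show "find P [a..<b] = Some k"
    by (auto simp: find_Some_iff intro!: exI[of _ "k - a"])
qed

lemma park_seq_None_mono:
  "park_seq E n p m = None \<Longrightarrow> m \<le> m' \<Longrightarrow> park_seq E n p m' = None"
  by (induction m') (auto simp: le_Suc_eq)

lemma park_seq_SucE:
  assumes "park_seq E n p (Suc m) = Some occ'"
  obtains occ k where "park_seq E n p m = Some occ"
    and "find (spot_available E n occ (Suc m)) [p (Suc m)..<n+1] = Some k"
    and "spot_available E n occ (Suc m) k" and "occ' = occ(k := Some (Suc m))"
proof -
  obtain occ where occ: "park_seq E n p m = Some occ"
    using assms by (cases "park_seq E n p m") auto
  with assms obtain k where k: "find (spot_available E n occ (Suc m)) [p (Suc m)..<n+1] = Some k"
    and "occ' = occ(k := Some (Suc m))"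
    by (auto simp: park_car_def split: option.splits)
  moreover have "spot_available E n occ (Suc m) k"
    using k[unfolded find_upt_eq_Some_iff] by blast
  ultimately show thesis using occ that by blast
qed

lemma park_seq_parked_stays:
  assumes "park_seq E n p m = Some occ" "occ k = Some c"
    and "m \<le> m'" "park_seq E n p m' = Some occ'"
  shows "occ' k = Some c"
  using assms(3,4)
proof (induction m' arbitrary: occ')
  case 0
  then show ?case using assms(1,2) by simp
next
  case (Suc m')
  show ?case
  proof (cases "m = Suc m'")
    case True
    then show ?thesis using Suc.prems assms(1,2) by simp
  next
    case False
    obtain occ'' k' where "park_seq E n p m' = Some occ''"
      and "spot_available E n occ'' (Suc m') k'" and "occ' = occ''(k' := Some (Suc m'))"
      using park_seq_SucE[OF Suc.prems(2)] by blast
    with Suc False show ?thesis by (auto simp: spot_available_def)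
  qed
qed

definition partial_outcome :: "nat \<Rightarrow> (nat \<Rightarrow> nat) \<Rightarrow> nat \<Rightarrow> nat \<Rightarrow> nat option" where
  "partial_outcome n \<pi> m k = (if k \<in> {1..n} \<and> \<pi> k \<le> m then Some (\<pi> k) else None)"

context
  fixes E :: "nat \<Rightarrow> nat \<Rightarrow> bool" and n :: nat and \<pi> :: "nat \<Rightarrow> nat"
  assumes sym: "\<And>x y. E x y \<Longrightarrow> E y x"
    and ham: "\<pi> \<in> Ham E n"
begin

lemma ham_bij: "bij_betw \<pi> {1..n} {1..n}"
  and ham_edge: "k \<in> {1..<n} \<Longrightarrow> E (\<pi> k) (\<pi> (k + 1))"
  using ham unfolding Ham_def by auto

lemma ham_in_range: "k \<in> {1..n} \<Longrightarrow> \<pi> k \<in> {1..n}"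
  using ham_bij bij_betwE by blast

lemma ham_unique_pos:
  assumes "i \<in> {1..n}"
  shows "\<exists>!k. k \<in> {1..n} \<and> \<pi> k = i"
proof -
  have "i \<in> \<pi> ` {1..n}" using ham_bij assms by (simp add: bij_betw_def)
  moreover have "inj_on \<pi> {1..n}" using ham_bij by (simp add: bij_betw_def)
  ultimately show ?thesis by (metis imageE inj_onD)
qed

lemma pos_in_range: "i \<in> {1..n} \<Longrightarrow> pos n \<pi> i \<in> {1..n}"
  and ham_pos: "i \<in> {1..n} \<Longrightarrow> \<pi> (pos n \<pi> i) = i"
  unfolding pos_def using theI'[OF ham_unique_pos] by blast+

lemma pos_ham:
  assumes "k \<in> {1..n}"
  shows "pos n \<pi> (\<pi> k) = k"
  unfolding pos_def using assms by (intro the1_equality ham_unique_pos ham_in_range) auto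

lemma partial_outcome_0: "partial_outcome n \<pi> 0 = (\<lambda>_. None)"
  using ham_in_range by (fastforce simp: partial_outcome_def)

lemma partial_outcome_Suc:
  assumes "Suc m \<in> {1..n}"
  shows "(partial_outcome n \<pi> m)(pos n \<pi> (Suc m) := Some (Suc m)) = partial_outcome n \<pi> (Suc m)"
proof
  fix k
  have "\<pi> k = Suc m \<longleftrightarrow> k = pos n \<pi> (Suc m)" if "k \<in> {1..n}"
    using that assms pos_ham ham_pos by (metis atLeastAtMost_iff le_add1 plus_1_eq_Suc)
  then show "((partial_outcome n \<pi> m)(pos n \<pi> (Suc m) := Some (Suc m))) k
      = partial_outcome n \<pi> (Suc m) k"
    using assms pos_in_range ham_pos by (auto simp: partial_outcome_def)
qed

lemma available_pos:
  assumes "i \<in> {1..n}"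
  shows "spot_available E n (partial_outcome n \<pi> (i - 1)) i (pos n \<pi> i)"
proof -
  let ?k = "pos n \<pi> i"
  have k: "?k \<in> {1..n}" "\<pi> ?k = i" using assms pos_in_range ham_pos by auto
  have "E i (\<pi> (?k - 1))" if "?k - 1 \<ge> 1"
    using ham_edge[of "?k - 1"] k that sym by auto
  moreover have "E i (\<pi> (?k + 1))" if "?k + 1 \<le> n"
    using ham_edge[of ?k] k that by auto
  ultimately show ?thesis using k assms by (auto simp: spot_available_def partial_outcome_def)
qed

text \<open>Symmetry of \<open>E\<close> reconciles the two conventions: availability asks for \<open>E i c\<close>,
  blocking for \<open>\<not> E (\<pi> l) i\<close>.\<close>

lemma available_before_pos_iff:
  assumes "i \<in> {1..n}" "k \<in> {1..n}" "k < pos n \<pi> i"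
  shows "spot_available E n (partial_outcome n \<pi> (i - 1)) i k \<longleftrightarrow> \<not> blocker_at E n \<pi> i k"
proof -
  have "\<pi> k \<noteq> i" using assms pos_ham by fastforce
  moreover have "k + 1 \<le> n" using assms pos_in_range by fastforce
  moreover have E_commute: "E i x \<longleftrightarrow> E x i" for x using sym by blast
  ultimately show ?thesis using assms
    by (auto simp: spot_available_def partial_outcome_def blocker_at_def E_commute)
qed

lemma blocker_at_pos: "i \<in> {1..n} \<Longrightarrow> blocker_at E n \<pi> i (pos n \<pi> i)"
  by (simp add: blocker_at_def ham_pos)

lemma block_start_least:
  "1 \<le> q \<Longrightarrow> \<forall>r\<in>{q..pos n \<pi> i}. blocker_at E n \<pi> i r \<Longrightarrow> block_start E n \<pi> i \<le> q"
  unfolding block_start_def by (rule Least_le) simp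

lemma block_start_blockers:
  assumes "i \<in> {1..n}"
  shows "1 \<le> block_start E n \<pi> i \<and> block_start E n \<pi> i \<le> pos n \<pi> i
    \<and> (\<forall>r\<in>{block_start E n \<pi> i..pos n \<pi> i}. blocker_at E n \<pi> i r)"
proof -
  let ?P = "\<lambda>s. 1 \<le> s \<and> (\<forall>r\<in>{s..pos n \<pi> i}. blocker_at E n \<pi> i r)"
  have "?P (pos n \<pi> i)" using assms pos_in_range blocker_at_pos by auto
  then have "?P (block_start E n \<pi> i)"
    unfolding block_start_def by (rule LeastI)
  moreover have "block_start E n \<pi> i \<le> pos n \<pi> i"
    using \<open>?P (pos n \<pi> i)\<close> block_start_least by blast
  ultimately show ?thesis by blast
qed

lemma S_set_iff:
  assumes "i \<in> {1..n}"
  shows "q \<in> S_set E n \<pi> i \<longleftrightarrow> q \<in> {1..n} \<and> block_start E n \<pi> i \<le> q \<and> q \<le> pos n \<pi> i"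
proof -
  have "{block_start E n \<pi> i..pos n \<pi> i} \<subseteq> {1..n}"
    using assms block_start_blockers pos_in_range by fastforce
  moreover have "inj_on \<pi> {1..n}" using ham_bij by (simp add: bij_betw_def)
  ultimately have "q \<in> {1..n} \<Longrightarrow> \<pi> q \<in> \<pi> ` {block_start E n \<pi> i..pos n \<pi> i}
      \<longleftrightarrow> q \<in> {block_start E n \<pi> i..pos n \<pi> i}"
    by (simp add: inj_on_image_mem_iff)
  then show ?thesis
    by (auto simp: S_set_def blocking_seq_def atLeastLessThanSuc_atLeastAtMost)
qed

lemma find_available_eq_pos_iff:
  assumes "i \<in> {1..n}" "q \<in> {1..n}"
  shows "find (spot_available E n (partial_outcome n \<pi> (i - 1)) i) [q..<n+1] = Some (pos n \<pi> i)
    \<longleftrightarrow> q \<in> S_set E n \<pi> i"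
proof -
  let ?A = "spot_available E n (partial_outcome n \<pi> (i - 1)) i"
  have pos: "pos n \<pi> i \<in> {1..n}" using assms pos_in_range by blast
  have "?A r \<longleftrightarrow> \<not> blocker_at E n \<pi> i r" if "r \<in> {q..<pos n \<pi> i}" for r
    using that assms pos available_before_pos_iff by auto
  then have "find ?A [q..<n+1] = Some (pos n \<pi> i)
      \<longleftrightarrow> q \<le> pos n \<pi> i \<and> (\<forall>r\<in>{q..<pos n \<pi> i}. blocker_at E n \<pi> i r)"
    using pos assms(1) available_pos unfolding find_upt_eq_Some_iff by auto
  also have "\<dots> \<longleftrightarrow> block_start E n \<pi> i \<le> q \<and> q \<le> pos n \<pi> i"
  proof
    assume q: "q \<le> pos n \<pi> i \<and> (\<forall>r\<in>{q..<pos n \<pi> i}. blocker_at E n \<pi> i r)"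
    moreover have "blocker_at E n \<pi> i (pos n \<pi> i)" using assms blocker_at_pos by blast
    ultimately have "\<forall>r\<in>{q..pos n \<pi> i}. blocker_at E n \<pi> i r"
      by (metis atLeastAtMost_iff atLeastLessThan_iff le_neq_implies_less)
    with assms show "block_start E n \<pi> i \<le> q \<and> q \<le> pos n \<pi> i"
      using q block_start_least by auto
  next
    assume "block_start E n \<pi> i \<le> q \<and> q \<le> pos n \<pi> i"
    then show "q \<le> pos n \<pi> i \<and> (\<forall>r\<in>{q..<pos n \<pi> i}. blocker_at E n \<pi> i r)"
      using assms block_start_blockers by auto
  qed
  also have "\<dots> \<longleftrightarrow> q \<in> S_set E n \<pi> i" using assms S_set_iff by auto
  finally show ?thesis .
qed

lemma park_seq_partial_outcome_if_S_set:
  assumes "\<forall>i\<in>{1..n}. p i \<in> S_set E n \<pi> i" "m \<le> n"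
  shows "park_seq E n p m = Some (partial_outcome n \<pi> m)"
  using assms(2)
proof (induction m)
  case 0
  then show ?case by (simp add: partial_outcome_0)
next
  case (Suc m)
  then have i: "Suc m \<in> {1..n}" by simp
  with assms(1) have "p (Suc m) \<in> S_set E n \<pi> (Suc m)" "p (Suc m) \<in> {1..n}"
    using S_set_iff by blast+
  then have "find (spot_available E n (partial_outcome n \<pi> m) (Suc m)) [p (Suc m)..<n+1]
      = Some (pos n \<pi> (Suc m))"
    using find_available_eq_pos_iff[OF i] by simp
  then show ?case using Suc partial_outcome_Suc[OF i] by (simp add: park_car_def)
qed

lemma S_set_if_park_seq_outcome:
  assumes final: "park_seq E n p n = Some occ" "\<forall>k\<in>{1..n}. the (occ k) = \<pi> k"
    and pref: "\<forall>i\<in>{1..n}. p i \<in> {1..n}" and "m \<le> n"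
  shows "park_seq E n p m = Some (partial_outcome n \<pi> m) \<and> (\<forall>i\<in>{1..m}. p i \<in> S_set E n \<pi> i)"
  using \<open>m \<le> n\<close>
proof (induction m)
  case 0
  then show ?case by (simp add: partial_outcome_0)
next
  case (Suc m)
  then have i: "Suc m \<in> {1..n}" and IH: "park_seq E n p m = Some (partial_outcome n \<pi> m)"
    "\<forall>i\<in>{1..m}. p i \<in> S_set E n \<pi> i" by auto
  obtain occ' where occ': "park_seq E n p (Suc m) = Some occ'"
    using park_seq_None_mono[of E n p "Suc m" n] final(1) Suc.prems by fastforce
  obtain k where find: "find (spot_available E n (partial_outcome n \<pi> m) (Suc m))
      [p (Suc m)..<n+1] = Some k" and "spot_available E n (partial_outcome n \<pi> m) (Suc m) k"
    and step: "occ' = (partial_outcome n \<pi> m)(k := Some (Suc m))"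
    by (rule park_seq_SucE[OF occ']) (use IH(1) in auto)
  then have k: "k \<in> {1..n}" by (simp add: spot_available_def)
  have "occ k = Some (Suc m)"
    using park_seq_parked_stays[OF occ' _ Suc.prems final(1)] step by simp
  then have "k = pos n \<pi> (Suc m)" using final(2) k pos_ham by force
  then have "p (Suc m) \<in> S_set E n \<pi> (Suc m)"
    using find find_available_eq_pos_iff[OF i] pref i by auto
  moreover have "occ' = partial_outcome n \<pi> (Suc m)"
    using step partial_outcome_Suc[OF i] \<open>k = pos n \<pi> (Suc m)\<close> by simp
  ultimately show ?case using IH(2) occ' by (auto simp: le_Suc_eq)
qed

end

theorem theorem2p6:
  fixes E :: "nat \<Rightarrow> nat \<Rightarrow> bool" and n :: nat and \<pi> p :: "nat \<Rightarrow> nat"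
  assumes sym: "\<And>x y. E x y \<Longrightarrow> E y x"
    and irrefl: "\<And>x. \<not> E x x"
    and ham: "\<pi> \<in> Ham E n"
    and pref: "\<forall>i\<in>{1..n}. p i \<in> {1..n}"
  shows "(p \<in> FPF E n \<and> (\<forall>k\<in>{1..n}. outcome E n p k = \<pi> k))
           \<longleftrightarrow> (\<forall>i\<in>{1..n}. p i \<in> S_set E n \<pi> i)"
proof
  assume "p \<in> FPF E n \<and> (\<forall>k\<in>{1..n}. outcome E n p k = \<pi> k)"
  then obtain occ where "park_seq E n p n = Some occ" "\<forall>k\<in>{1..n}. the (occ k) = \<pi> k"
    by (auto simp: FPF_def outcome_def)
  then show "\<forall>i\<in>{1..n}. p i \<in> S_set E n \<pi> i"
    using S_set_if_park_seq_outcome[OF sym ham _ _ pref order_refl] by blast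
next
  assume "\<forall>i\<in>{1..n}. p i \<in> S_set E n \<pi> i"
  then have "park_seq E n p n = Some (partial_outcome n \<pi> n)"
    using park_seq_partial_outcome_if_S_set[OF sym ham] by blast
  then show "p \<in> FPF E n \<and> (\<forall>k\<in>{1..n}. outcome E n p k = \<pi> k)"
    using pref ham_in_range[OF sym ham] by (auto simp: FPF_def outcome_def partial_outcome_def)
qed

end
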